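(* Let $\mathcal{H}_o=(V,\vec H,\bm{w})$ be a strongly connected weighted oriented hypergraph with $|V|\ge2$, and let $w_{\max}=\max_{h\in\vec H}w_h$. (i) If $h=(A_h,B_h)\in\vec H$ is such that the limit $\kappa(h)=\lim_{\alpha\to1^-}\kappa_\alpha(h)/(1-\alpha)$ exists in $\mathbb{R}$ and $\kappa(h)>0$, then $L(h)\le\frac{2w_{\max}}{\kappa(h)}$. (ii) If there is a constant $\kappa>0$ such that $\kappa(u,v)\ge\kappa$ for every hyperedge $h\in\vec H$ and all $u\in A_h$, $v\in B_h$, then $$\mathrm{diam}(\mathcal{H}_o)\le\frac{2w_{\max}}{\kappa}.$$
   Context: A weighted oriented hypergraph $(V,\vec H,\bm w)$ has a finite vertex set $V$, a finite set $\vec H$ of hyperedges, each an ordered pair $h=(A_h,B_h)$ of nonempty subsets of $V$ with $A_h\cap B_h=\emptyset$, such that for every $h\in\vec H$ its reversal $h^-=(B_h,A_h)$ also belongs to $\vec H$, and positive weights with $w_h=w_{h^-}$. A directed path from $u$ to $v$ is a sequence of hyperedges $h_1,\dots,h_l$ with $u\in A_{h_1}$, $v\in B_{h_l}$, $B_{h_j}\cap A_{h_{j+1}}\ne\emptyset$; strongly connected means such a path exists for all distinct $u,v$. $d(u,v)=\inf_\gamma\sum_{h\in\gamma}w_h$ over directed paths from $u$ to $v$ ($u\ne v$), $d(u,u)=0$; $\mathrm{diam}(\mathcal{H}_o)=\max_{u,v}d(u,v)$; $L(h)=\min_{x\in A_h,y\in B_h}d(x,y)$. $\Gamma^{in}(v)=\{z:\exists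 h'\text{ with }v\in B_{h'},z\in A_{h'}\}$, $\Gamma^{out}(v)=\{z:\exists h'\text{ with }v\in A_{h'},z\in B_{h'}\}$, and $\Gamma(v)=\Gamma^{out}(v)$. Hyperedge measures, for $A_h=\{x_1,\dots,x_n\}$, $B_h=\{y_1,\dots,y_m\}$, $\alpha\in[0,1]$: $\mu^\alpha_{A_h}=\sum_i\mu^\alpha_{x_i}$ with $\mu^\alpha_{x_i}(x_i)=\alpha/n$, $\mu^\alpha_{x_i}(z)=(1-\alpha)\sum_{h':x_i\in B_{h'},z\in A_{h'}}\frac{1}{n|A_{h'}|}\frac{w_{h'}}{\sum_{h'':x_i\in B_{h''}}w_{h''}}$ for $z\in\Gamma^{in}(x_i)$, $0$ otherwise; $\mu^\alpha_{B_h}=\sum_j\mu^\alpha_{y_j}$ with $\mu^\alpha_{y_j}(y_j)=\alpha/m$, $\mu^\alpha_{y_j}(z)=(1-\alpha)\sum_{h':y_j\in A_{h'},z\in B_{h'}}\frac{1}{m|B_{h'}|}\frac{w_{h'}}{\sum_{h'':y_j\in A_{h''}}w_{h''}}$ for $z\in\Gamma^{out}(y_j)$, $0$ otherwise; $\kappa_\alpha(h)=1-W(\mu^\alpha_{A_h},\mu^\alpha_{B_h})/L(h)$. Vertex measures: $\mu^\alpha_{u^{in}}(u)=\alpha$, $\mu^\alpha_{u^{in}}(z)=(1-\alpha)\sum_{h':u\in B_{h'},z\in A_{h'}}\frac{1}{|A_{h'}|}\frac{w_{h'}}{\sum_{h'':u\in B_{h''}}w_{h''}}$ for $z\in\Gamma(u)$,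 $0$ otherwise; $\mu^\alpha_{v^{out}}(v)=\alpha$, $\mu^\alpha_{v^{out}}(z)=(1-\alpha)\sum_{h':v\in A_{h'},z\in B_{h'}}\frac{1}{|B_{h'}|}\frac{w_{h'}}{\sum_{h'':v\in A_{h''}}w_{h''}}$ for $z\in\Gamma(v)$, $0$ otherwise. $W(\mu,\nu)=\inf_\pi\sum_{x,y}\pi(x,y)d(x,y)$ over couplings $\pi$ of $\mu,\nu$. For distinct $u,v$: $\kappa_\alpha(u,v)=1-W(\mu^\alpha_{u^{in}},\mu^\alpha_{v^{out}})/d(u,v)$ and $\kappa(u,v)=\lim_{\alpha\to1^-}\kappa_\alpha(u,v)/(1-\alpha)$ (this limit exists in $\mathbb{R}$). *)

theory Defs
  imports "HOL-Analysis.Analysis"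
begin

text \<open>A hyperedge is a pair (A_h, B_h) of vertex sets; fst = tail A_h, snd = head B_h.\<close>

type_synonym 'v hedge = "'v set \<times> 'v set"

definition oriented_hypergraph :: "'v set \<Rightarrow> 'v hedge set \<Rightarrow> ('v hedge \<Rightarrow> real) \<Rightarrow> bool" where
  "oriented_hypergraph V H w \<longleftrightarrow> finite V \<and> finite H \<and>
     (\<forall>h\<in>H. fst h \<noteq> {} \<and> snd h \<noteq> {} \<and> fst h \<subseteq> V \<and> snd h \<subseteq> V \<and> fst h \<inter> snd h = {}
        \<and> (snd h, fst h) \<in> H \<and> 0 < w h \<and> w (snd h, fst h) = w h)"

definition dpath :: "'v hedge set \<Rightarrow> 'v \<Rightarrow> 'v \<Rightarrow> 'v hedge list \<Rightarrow> bool" where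
  "dpath H u v hs \<longleftrightarrow> hs \<noteq> [] \<and> set hs \<subseteq> H \<and> u \<in> fst (hd hs) \<and> v \<in> snd (last hs) \<and>
     (\<forall>j. Suc j < length hs \<longrightarrow> snd (hs ! j) \<inter> fst (hs ! Suc j) \<noteq> {})"

definition strongly_connected :: "'v set \<Rightarrow> 'v hedge set \<Rightarrow> bool" where
  "strongly_connected V H \<longleftrightarrow> (\<forall>u\<in>V. \<forall>v\<in>V. u \<noteq> v \<longrightarrow> (\<exists>hs. dpath H u v hs))"

definition hdist :: "'v hedge set \<Rightarrow> ('v hedge \<Rightarrow> real) \<Rightarrow> 'v \<Rightarrow> 'v \<Rightarrow> real" where
  "hdist H w u v = (if u = v then 0 else Inf {sum_list (map w hs) | hs. dpath H u v hs})"

definition diam :: "'v set \<Rightarrow> 'v hedge set \<Rightarrow> ('v hedge \<Rightarrow> real) \<Rightarrow> real" where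
  "diam V H w = Max {hdist H w u v | u v. u \<in> V \<and> v \<in> V}"

definition hedge_len :: "'v hedge set \<Rightarrow> ('v hedge \<Rightarrow> real) \<Rightarrow> 'v hedge \<Rightarrow> real" where
  "hedge_len H w h = Min {hdist H w x y | x y. x \<in> fst h \<and> y \<in> snd h}"

definition wmax :: "'v hedge set \<Rightarrow> ('v hedge \<Rightarrow> real) \<Rightarrow> real" where
  "wmax H w = Max (w ` H)"

definition wasserstein :: "'v set \<Rightarrow> ('v \<Rightarrow> 'v \<Rightarrow> real) \<Rightarrow> ('v \<Rightarrow> real) \<Rightarrow> ('v \<Rightarrow> real) \<Rightarrow> real" where
  "wasserstein V d \<mu> \<nu> = Inf {(\<Sum>x\<in>V. \<Sum>y\<in>V. \<pi> x y * d x y) | \<pi>.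
      (\<forall>x\<in>V. \<forall>y\<in>V. 0 \<le> \<pi> x y) \<and> (\<forall>x\<in>V. (\<Sum>y\<in>V. \<pi> x y) = \<mu> x) \<and> (\<forall>y\<in>V. (\<Sum>x\<in>V. \<pi> x y) = \<nu> y)}"

definition mu_tail_vertex :: "'v hedge set \<Rightarrow> ('v hedge \<Rightarrow> real) \<Rightarrow> real \<Rightarrow> real \<Rightarrow> 'v \<Rightarrow> 'v \<Rightarrow> real" where
  "mu_tail_vertex H w \<alpha> n x z =
     (if z = x then \<alpha> / n else 0) +
     (1 - \<alpha>) * (\<Sum>h'\<in>{h'\<in>H. x \<in> snd h' \<and> z \<in> fst h'}.
        (1 / (n * real (card (fst h')))) * (w h' / (\<Sum>h''\<in>{h''\<in>H. x \<in> snd h''}. w h'')))"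

definition mu_head_vertex :: "'v hedge set \<Rightarrow> ('v hedge \<Rightarrow> real) \<Rightarrow> real \<Rightarrow> real \<Rightarrow> 'v \<Rightarrow> 'v \<Rightarrow> real" where
  "mu_head_vertex H w \<alpha> m y z =
     (if z = y then \<alpha> / m else 0) +
     (1 - \<alpha>) * (\<Sum>h'\<in>{h'\<in>H. y \<in> fst h' \<and> z \<in> snd h'}.
        (1 / (m * real (card (snd h')))) * (w h' / (\<Sum>h''\<in>{h''\<in>H. y \<in> fst h''}. w h'')))"

definition mu_A :: "'v hedge set \<Rightarrow> ('v hedge \<Rightarrow> real) \<Rightarrow> real \<Rightarrow> 'v hedge \<Rightarrow> 'v \<Rightarrow> real" where
  "mu_A H w \<alpha> h z = (\<Sum>x\<in>fst h. mu_tail_vertex H w \<alpha> (real (card (fst h))) x z)"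

definition mu_B :: "'v hedge set \<Rightarrow> ('v hedge \<Rightarrow> real) \<Rightarrow> real \<Rightarrow> 'v hedge \<Rightarrow> 'v \<Rightarrow> real" where
  "mu_B H w \<alpha> h z = (\<Sum>y\<in>snd h. mu_head_vertex H w \<alpha> (real (card (snd h))) y z)"

definition kappa_alpha_edge :: "'v set \<Rightarrow> 'v hedge set \<Rightarrow> ('v hedge \<Rightarrow> real) \<Rightarrow> real \<Rightarrow> 'v hedge \<Rightarrow> real" where
  "kappa_alpha_edge V H w \<alpha> h =
     1 - wasserstein V (hdist H w) (mu_A H w \<alpha> h) (mu_B H w \<alpha> h) / hedge_len H w h"

definition mu_in :: "'v hedge set \<Rightarrow> ('v hedge \<Rightarrow> real) \<Rightarrow> real \<Rightarrow> 'v \<Rightarrow> 'v \<Rightarrow> real" where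
  "mu_in H w \<alpha> u z =
     (if z = u then \<alpha> else 0) +
     (1 - \<alpha>) * (\<Sum>h'\<in>{h'\<in>H. u \<in> snd h' \<and> z \<in> fst h'}.
        (1 / real (card (fst h'))) * (w h' / (\<Sum>h''\<in>{h''\<in>H. u \<in> snd h''}. w h'')))"

definition mu_out :: "'v hedge set \<Rightarrow> ('v hedge \<Rightarrow> real) \<Rightarrow> real \<Rightarrow> 'v \<Rightarrow> 'v \<Rightarrow> real" where
  "mu_out H w \<alpha> v z =
     (if z = v then \<alpha> else 0) +
     (1 - \<alpha>) * (\<Sum>h'\<in>{h'\<in>H. v \<in> fst h' \<and> z \<in> snd h'}.
        (1 / real (card (snd h'))) * (w h' / (\<Sum>h''\<in>{h''\<in>H. v \<in> fst h''}. w h'')))"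

definition kappa_alpha_vertex :: "'v set \<Rightarrow> 'v hedge set \<Rightarrow> ('v hedge \<Rightarrow> real) \<Rightarrow> real \<Rightarrow> 'v \<Rightarrow> 'v \<Rightarrow> real" where
  "kappa_alpha_vertex V H w \<alpha> u v =
     1 - wasserstein V (hdist H w) (mu_in H w \<alpha> u) (mu_out H w \<alpha> v) / hdist H w u v"

definition kappa_vertex :: "'v set \<Rightarrow> 'v hedge set \<Rightarrow> ('v hedge \<Rightarrow> real) \<Rightarrow> 'v \<Rightarrow> 'v \<Rightarrow> real" where
  "kappa_vertex V H w u v =
     Lim (at_left 1) (\<lambda>\<alpha>. kappa_alpha_vertex V H w \<alpha> u v / (1 - \<alpha>))"

end

(*
  Both bounds come from testing Wasserstein distances against 1-Lipschitz functions (the easy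
  half of Kantorovich duality). A lazy random-walk measure keeps mass alpha at its centre and moves
  the remaining 1 - alpha across single hyperedges, so the mean of a 1-Lipschitz function under it
  is within (1 - alpha) w_max of the value at the centre.

  (i) Testing with the distance to the head B_h gives W(mu_A, mu_B) >= L(h) - 2 (1 - alpha) w_max,
  i.e. kappa_alpha(h) / (1 - alpha) <= 2 w_max / L(h) for every alpha, and the limit inherits this.

  (ii) The ratio kappa_alpha(u,v) / (1 - alpha) is nondecreasing and bounded in alpha, because
  lowering the laziness only mixes the measures with point masses; so kappa(u,v) is its limit. For
  alpha close to 1 every hyperedge is therefore contracted by the factor 1 - (1 - alpha) kappa'
  for any kappa' < kappa. Chaining along paths, the mean of d(., y) drops from x to y by at most
  that factor times d(x, y), while it must drop by at least d(x, y) - 2 (1 - alpha) w_max; hence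
  kappa' d(x, y) <= 2 w_max.
*)

theory Submission
  imports Defs
begin

section \<open>Couplings and the Wasserstein distance\<close>

definition prob_vector :: "'a set \<Rightarrow> ('a \<Rightarrow> real) \<Rightarrow> bool" where
  "prob_vector V \<mu> \<longleftrightarrow> (\<forall>x\<in>V. 0 \<le> \<mu> x) \<and> (\<Sum>x\<in>V. \<mu> x) = 1"

definition coupling :: "'a set \<Rightarrow> ('a \<Rightarrow> real) \<Rightarrow> ('a \<Rightarrow> real) \<Rightarrow> ('a \<Rightarrow> 'a \<Rightarrow> real) \<Rightarrow> bool" where
  "coupling V \<mu> \<nu> \<pi> \<longleftrightarrow> (\<forall>x\<in>V. \<forall>y\<in>V. 0 \<le> \<pi> x y) \<and>
     (\<forall>x\<in>V. (\<Sum>y\<in>V. \<pi> x y) = \<mu> x) \<and> (\<forall>y\<in>V. (\<Sum>x\<in>V. \<pi> x y) = \<nu> y)"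

definition one_lipschitz :: "'a set \<Rightarrow> ('a \<Rightarrow> 'a \<Rightarrow> real) \<Rightarrow> ('a \<Rightarrow> real) \<Rightarrow> bool" where
  "one_lipschitz V d \<phi> \<longleftrightarrow> (\<forall>a\<in>V. \<forall>b\<in>V. \<phi> a - \<phi> b \<le> d a b)"

lemma prob_vector_finite: "prob_vector V \<mu> \<Longrightarrow> finite V"
  unfolding prob_vector_def by (metis sum.infinite zero_neq_one)

lemma wasserstein_eq_Inf_coupling:
  "wasserstein V d \<mu> \<nu> = Inf {(\<Sum>x\<in>V. \<Sum>y\<in>V. \<pi> x y * d x y) | \<pi>. coupling V \<mu> \<nu> \<pi>}"
  unfolding wasserstein_def coupling_def ..

lemma coupling_product:
  assumes "prob_vector V \<mu>" "prob_vector V \<nu>"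
  shows "coupling V \<mu> \<nu> (\<lambda>x y. \<mu> x * \<nu> y)"
  using assms by (simp add: coupling_def prob_vector_def flip: sum_distrib_left sum_distrib_right)

lemma transport_cost_bdd_below:
  assumes "\<forall>x\<in>V. \<forall>y\<in>V. 0 \<le> d x y"
  shows "bdd_below {(\<Sum>x\<in>V. \<Sum>y\<in>V. \<pi> x y * d x y) | \<pi>. coupling V \<mu> \<nu> \<pi>}"
  using assms by (auto simp: coupling_def intro!: bdd_belowI[of _ 0] sum_nonneg)

lemma wasserstein_le_transport_cost:
  assumes "\<forall>x\<in>V. \<forall>y\<in>V. 0 \<le> d x y" "coupling V \<mu> \<nu> \<pi>"
  shows "wasserstein V d \<mu> \<nu> \<le> (\<Sum>x\<in>V. \<Sum>y\<in>V. \<pi> x y * d x y)"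
  unfolding wasserstein_eq_Inf_coupling
  using assms by (auto intro: cInf_lower transport_cost_bdd_below)

lemma coupling_mean_diff:
  assumes "coupling V \<mu> \<nu> \<pi>"
  shows "(\<Sum>x\<in>V. \<Sum>y\<in>V. \<pi> x y * (\<phi> x - \<phi> y)) = (\<Sum>x\<in>V. \<mu> x * \<phi> x) - (\<Sum>y\<in>V. \<nu> y * \<phi> y)"
proof -
  have "(\<Sum>x\<in>V. \<Sum>y\<in>V. \<pi> x y * \<phi> x) = (\<Sum>x\<in>V. \<mu> x * \<phi> x)"
    using assms by (simp add: coupling_def flip: sum_distrib_right)
  moreover have "(\<Sum>x\<in>V. \<Sum>y\<in>V. \<pi> x y * \<phi> y) = (\<Sum>y\<in>V. \<nu> y * \<phi> y)"
    using assms by (subst sum.swap) (simp add: coupling_def flip: sum_distrib_right)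
  ultimately show ?thesis
    by (simp add: right_diff_distrib sum_subtractf)
qed

lemma lipschitz_mean_diff_le_wasserstein:
  assumes "\<forall>x\<in>V. \<forall>y\<in>V. 0 \<le> d x y" "prob_vector V \<mu>" "prob_vector V \<nu>" "one_lipschitz V d \<phi>"
  shows "(\<Sum>x\<in>V. \<mu> x * \<phi> x) - (\<Sum>y\<in>V. \<nu> y * \<phi> y) \<le> wasserstein V d \<mu> \<nu>"
  unfolding wasserstein_eq_Inf_coupling
proof (rule cInf_greatest)
  show "{(\<Sum>x\<in>V. \<Sum>y\<in>V. \<pi> x y * d x y) | \<pi>. coupling V \<mu> \<nu> \<pi>} \<noteq> {}"
    using coupling_product[OF assms(2,3)] by blast
next
  fix c assume "c \<in> {(\<Sum>x\<in>V. \<Sum>y\<in>V. \<pi> x y * d x y) | \<pi>. coupling V \<mu> \<nu> \<pi>}"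
  then obtain \<pi> where \<pi>: "coupling V \<mu> \<nu> \<pi>" and c: "c = (\<Sum>x\<in>V. \<Sum>y\<in>V. \<pi> x y * d x y)"
    by auto
  have "(\<Sum>x\<in>V. \<Sum>y\<in>V. \<pi> x y * (\<phi> x - \<phi> y)) \<le> c"
    using \<pi> assms(4) unfolding c by (auto simp: coupling_def one_lipschitz_def intro!: sum_mono mult_left_mono)
  then show "(\<Sum>x\<in>V. \<mu> x * \<phi> x) - (\<Sum>y\<in>V. \<nu> y * \<phi> y) \<le> c"
    by (simp add: coupling_mean_diff[OF \<pi>])
qed

lemma wasserstein_mix_point_mass_le:
  assumes d: "\<forall>x\<in>V. \<forall>y\<in>V. 0 \<le> d x y" and \<mu>: "prob_vector V \<mu>" and \<nu>: "prob_vector V \<nu>"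
    and ab: "a \<in> V" "b \<in> V" and t: "0 < t" "t \<le> 1"
  shows "wasserstein V d (\<lambda>x. t * \<mu> x + (1 - t) * (if x = a then 1 else 0))
           (\<lambda>y. t * \<nu> y + (1 - t) * (if y = b then 1 else 0))
         \<le> t * wasserstein V d \<mu> \<nu> + (1 - t) * d a b"
    (is "?W' \<le> _")
proof -
  have fin: "finite V" using prob_vector_finite[OF \<mu>] .
  have "(?W' - (1 - t) * d a b) / t \<le> wasserstein V d \<mu> \<nu>"
    unfolding wasserstein_eq_Inf_coupling[of V d \<mu> \<nu>]
  proof (rule cInf_greatest)
    show "{(\<Sum>x\<in>V. \<Sum>y\<in>V. \<pi> x y * d x y) | \<pi>. coupling V \<mu> \<nu> \<pi>} \<noteq> {}"
      using coupling_product[OF \<mu> \<nu>] by blast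
  next
    fix c assume "c \<in> {(\<Sum>x\<in>V. \<Sum>y\<in>V. \<pi> x y * d x y) | \<pi>. coupling V \<mu> \<nu> \<pi>}"
    then obtain \<pi> where \<pi>: "coupling V \<mu> \<nu> \<pi>" and c: "c = (\<Sum>x\<in>V. \<Sum>y\<in>V. \<pi> x y * d x y)"
      by auto
    define \<delta> where "\<delta> x y = (if x = a \<and> y = b then 1 else 0 :: real)" for x y
    define \<pi>' where "\<pi>' x y = t * \<pi> x y + (1 - t) * \<delta> x y" for x y
    have \<delta>_row: "(\<Sum>y\<in>V. \<delta> x y) = (if x = a then 1 else 0)" for x
      using fin ab by (simp add: \<delta>_def)
    have \<delta>_col: "(\<Sum>x\<in>V. \<delta> x y) = (if y = b then 1 else 0)" for y
      using fin ab by (simp add: \<delta>_def)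
    have "coupling V (\<lambda>x. t * \<mu> x + (1 - t) * (if x = a then 1 else 0))
        (\<lambda>y. t * \<nu> y + (1 - t) * (if y = b then 1 else 0)) \<pi>'"
      using \<pi> t unfolding coupling_def \<pi>'_def
      by (auto simp: sum.distrib \<delta>_row \<delta>_col simp flip: sum_distrib_left)
        (auto simp: \<delta>_def)
    then have "?W' \<le> (\<Sum>x\<in>V. \<Sum>y\<in>V. \<pi>' x y * d x y)"
      by (rule wasserstein_le_transport_cost[OF d])
    also have "\<dots> = t * c + (1 - t) * (\<Sum>x\<in>V. \<Sum>y\<in>V. \<delta> x y * d x y)"
      unfolding \<pi>'_def c by (simp add: distrib_right sum.distrib sum_distrib_left mult.assoc)
    also have "(\<Sum>x\<in>V. \<Sum>y\<in>V. \<delta> x y * d x y) = d a b"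
    proof -
      have "(\<Sum>y\<in>V. \<delta> x y * d x y) = (if x = a then d a b else 0)" for x
        using fin ab by (simp add: \<delta>_def if_distrib[of "\<lambda>c. c * _"] cong: if_cong)
      then show ?thesis
        using fin ab by simp
    qed
    finally show "(?W' - (1 - t) * d a b) / t \<le> c"
      using t by (simp add: field_simps)
  qed
  then show ?thesis
    using t by (simp add: pos_divide_le_eq algebra_simps)
qed

lemma abs_mean_minus_le:
  assumes \<mu>: "prob_vector V \<mu>" and u: "u \<in> V"
    and near: "\<And>z. z \<in> V \<Longrightarrow> z \<noteq> u \<Longrightarrow> \<mu> z \<noteq> 0 \<Longrightarrow> \<bar>\<phi> z - \<phi> u\<bar> \<le> r"
  shows "\<bar>(\<Sum>z\<in>V. \<mu> z * \<phi> z) - \<phi> u\<bar> \<le> (1 - \<mu> u) * r"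
proof -
  have fin: "finite V" using prob_vector_finite[OF \<mu>] .
  have mass: "(\<Sum>z\<in>V. \<mu> z) = 1" and nonneg: "\<And>z. z \<in> V \<Longrightarrow> 0 \<le> \<mu> z"
    using \<mu> by (auto simp: prob_vector_def)
  have "(\<Sum>z\<in>V. \<mu> z * \<phi> z) - \<phi> u = (\<Sum>z\<in>V. \<mu> z * (\<phi> z - \<phi> u))"
    by (simp add: right_diff_distrib sum_subtractf mass flip: sum_distrib_right)
  also have "\<dots> = (\<Sum>z\<in>V - {u}. \<mu> z * (\<phi> z - \<phi> u))"
    using fin u by (simp add: sum.remove)
  finally have "\<bar>(\<Sum>z\<in>V. \<mu> z * \<phi> z) - \<phi> u\<bar> \<le> (\<Sum>z\<in>V - {u}. \<bar>\<mu> z * (\<phi> z - \<phi> u)\<bar>)"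
    by (simp only: sum_abs)
  also have "\<dots> \<le> (\<Sum>z\<in>V - {u}. \<mu> z * r)"
  proof (rule sum_mono)
    fix z assume "z \<in> V - {u}"
    then show "\<bar>\<mu> z * (\<phi> z - \<phi> u)\<bar> \<le> \<mu> z * r"
      using near[of z] nonneg[of z] by (cases "\<mu> z = 0") (auto simp: abs_mult intro: mult_left_mono)
  qed
  also have "\<dots> = (1 - \<mu> u) * r"
    using fin u mass by (simp add: sum_diff1 flip: sum_distrib_right)
  finally show ?thesis .
qed

lemma
  assumes "finite X" "X \<noteq> {}" "\<And>x. x \<in> X \<Longrightarrow> prob_vector V (\<mu> x)"
  shows prob_vector_average: "prob_vector V (\<lambda>z. (\<Sum>x\<in>X. \<mu> x z) / card X)"
    and mean_average: "(\<Sum>z\<in>V. (\<Sum>x\<in>X. \<mu> x z) / card X * \<phi> z) = (\<Sum>x\<in>X. \<Sum>z\<in>V. \<mu> x z * \<phi> z) / card X"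
proof -
  have "(\<Sum>z\<in>V. (\<Sum>x\<in>X. \<mu> x z) / card X) = (\<Sum>x\<in>X. \<Sum>z\<in>V. \<mu> x z) / card X"
    by (simp add: sum.swap[of _ V] flip: sum_divide_distrib)
  also have "\<dots> = 1"
    using assms by (simp add: prob_vector_def)
  finally show "prob_vector V (\<lambda>z. (\<Sum>x\<in>X. \<mu> x z) / card X)"
    using assms by (auto simp: prob_vector_def intro!: divide_nonneg_nonneg sum_nonneg)
  show "(\<Sum>z\<in>V. (\<Sum>x\<in>X. \<mu> x z) / card X * \<phi> z) = (\<Sum>x\<in>X. \<Sum>z\<in>V. \<mu> x z * \<phi> z) / card X"
    by (simp add: sum.swap[of _ V] sum_distrib_right flip: sum_divide_distrib)
qed

section \<open>Directed paths\<close>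

lemma dpath_ConsD:
  assumes "dpath H a y (h # hs)" "hs \<noteq> []"
  obtains b where "b \<in> snd h" "dpath H b y hs"
proof -
  have "snd ((h # hs) ! 0) \<inter> fst ((h # hs) ! Suc 0) \<noteq> {}"
    using assms unfolding dpath_def by (metis length_Cons length_greater_0_conv Suc_less_eq)
  then obtain b where "b \<in> snd h" "b \<in> fst (hd hs)"
    using assms(2) by (auto simp: hd_conv_nth)
  moreover have "snd (hs ! j) \<inter> fst (hs ! Suc j) \<noteq> {}" if "Suc j < length hs" for j
    using assms(1) that unfolding dpath_def by (metis Suc_less_eq length_Cons nth_Cons_Suc)
  then have "dpath H b y hs"
    using assms \<open>b \<in> fst (hd hs)\<close> by (auto simp: dpath_def)
  ultimately show thesis using that by blast
qed

lemma dpath_append: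
  assumes "dpath H a b p" "dpath H b c q"
  shows "dpath H a c (p @ q)"
proof -
  have "snd ((p @ q) ! j) \<inter> fst ((p @ q) ! Suc j) \<noteq> {}" if j: "Suc j < length (p @ q)" for j
  proof (cases "Suc j = length p")
    case True
    then have "j = length p - 1" by simp
    then have "(p @ q) ! j = last p" "(p @ q) ! Suc j = hd q"
      using assms True by (auto simp: dpath_def nth_append last_conv_nth hd_conv_nth)
    then show ?thesis using assms by (auto simp: dpath_def)
  next
    case False
    then show ?thesis
      using assms j unfolding dpath_def
      by (cases "Suc j < length p") (auto simp: nth_append Suc_diff_le dest: spec[of _ "j - length p"])
  qed
  then show ?thesis using assms by (auto simp: dpath_def)
qed

lemma dpath_telescope:
  fixes w :: "'v hedge \<Rightarrow> real"
  assumes step: "\<And>h a b. h \<in> H \<Longrightarrow> a \<in> fst h \<Longrightarrow> b \<in> snd h \<Longrightarrow> f a - f b \<le> c * w h"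
    and "dpath H x y hs"
  shows "f x - f y \<le> c * sum_list (map w hs)"
  using assms(2)
proof (induction hs arbitrary: x)
  case Nil
  then show ?case by (simp add: dpath_def)
next
  case (Cons h hs)
  have h: "h \<in> H" "x \<in> fst h" using Cons.prems by (auto simp: dpath_def)
  show ?case
  proof (cases "hs = []")
    case True
    then show ?thesis using Cons.prems step[OF h] by (simp add: dpath_def)
  next
    case False
    obtain b where b: "b \<in> snd h" "dpath H b y hs"
      using dpath_ConsD[OF Cons.prems False] by blast
    have "f x - f b \<le> c * w h" "f b - f y \<le> c * sum_list (map w hs)"
      using step[OF h b(1)] Cons.IH[OF b(2)] .
    then show ?thesis
      by (simp add: distrib_left)
  qed
qed

lemma curvature_ratio_le:
  fixes D W M \<alpha> :: real
  assumes "0 < D" "\<alpha> < 1" "D - W \<le> 2 * (1 - \<alpha>) * M"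
  shows "(1 - W / D) / (1 - \<alpha>) \<le> 2 * M / D"
proof -
  have "1 - W / D = (D - W) / D" using assms(1) by (simp add: diff_divide_distrib)
  also have "\<dots> \<le> 2 * (1 - \<alpha>) * M / D" using assms by (intro divide_right_mono) auto
  finally show ?thesis using assms(2) by (simp add: field_simps)
qed

lemma sum_scaled_reciprocal:
  "(\<Sum>h\<in>T. 1 / (n * c h) * X h) = (\<Sum>h\<in>T. 1 / c h * X h) / (n :: real)"
  by (simp add: sum_divide_distrib mult.commute)

lemma mu_tail_vertex_eq: "mu_tail_vertex H w \<alpha> n x z = mu_in H w \<alpha> x z / n"
  unfolding mu_tail_vertex_def mu_in_def sum_scaled_reciprocal by (simp add: add_divide_distrib)

lemma mu_head_vertex_eq: "mu_head_vertex H w \<alpha> n x z = mu_out H w \<alpha> x z / n"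
  unfolding mu_head_vertex_def mu_out_def sum_scaled_reciprocal by (simp add: add_divide_distrib)

lemma mu_A_eq: "mu_A H w \<alpha> h = (\<lambda>z. (\<Sum>x\<in>fst h. mu_in H w \<alpha> x z) / card (fst h))"
  by (simp add: fun_eq_iff mu_A_def mu_tail_vertex_eq sum_divide_distrib)

lemma lazy_mix:
  fixes t \<alpha> \<beta> P :: real
  assumes "t * (1 - \<alpha>) = 1 - \<beta>"
  shows "(if c then \<beta> else 0) + (1 - \<beta>) * P
    = t * ((if c then \<alpha> else 0) + (1 - \<alpha>) * P) + (1 - t) * (if c then 1 else 0)"
proof -
  have "(1 - \<beta>) * P = t * ((1 - \<alpha>) * P)" using assms by simp
  then show ?thesis using assms by (cases c) (simp_all add: algebra_simps)
qed

lemma mu_in_mix: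
  assumes "\<alpha> < 1"
  shows "mu_in H w \<beta> u = (\<lambda>z. (1 - \<beta>) / (1 - \<alpha>) * mu_in H w \<alpha> u z
    + (1 - (1 - \<beta>) / (1 - \<alpha>)) * (if z = u then 1 else 0))"
  unfolding mu_in_def using assms by (intro ext lazy_mix) simp

section \<open>Strongly connected oriented hypergraphs\<close>

locale strongly_connected_hypergraph =
  fixes V :: "'v set" and H :: "'v hedge set" and w :: "'v hedge \<Rightarrow> real"
  assumes oriented_hypergraph: "oriented_hypergraph V H w"
    and strongly_connected: "strongly_connected V H"
    and two_le_card: "card V \<ge> 2"
begin

abbreviation d :: "'v \<Rightarrow> 'v \<Rightarrow> real" where
  "d \<equiv> hdist H w"

lemma finite_V: "finite V" and finite_H: "finite H"
  using oriented_hypergraph by (auto simp: oriented_hypergraph_def)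

lemma hedge_wf:
  assumes "h \<in> H"
  shows "fst h \<noteq> {}" "snd h \<noteq> {}" "fst h \<subseteq> V" "snd h \<subseteq> V" "fst h \<inter> snd h = {}"
    "(snd h, fst h) \<in> H" "0 < w h" "w (snd h, fst h) = w h"
  using oriented_hypergraph assms by (auto simp: oriented_hypergraph_def)

lemma finite_fst: "h \<in> H \<Longrightarrow> finite (fst h)" and finite_snd: "h \<in> H \<Longrightarrow> finite (snd h)"
  by (metis finite_subset hedge_wf(3) finite_V) (metis finite_subset hedge_wf(4) finite_V)

lemma dpath_exists: "u \<in> V \<Longrightarrow> v \<in> V \<Longrightarrow> u \<noteq> v \<Longrightarrow> \<exists>hs. dpath H u v hs"
  using strongly_connected by (auto simp: strongly_connected_def)

lemma path_cost_nonneg: "set hs \<subseteq> H \<Longrightarrow> 0 \<le> sum_list (map w hs)"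
  by (induction hs) (auto dest: hedge_wf(7) intro: add_nonneg_nonneg less_imp_le)

lemma hdist_le_path_cost:
  assumes "dpath H u v hs" "u \<noteq> v"
  shows "d u v \<le> sum_list (map w hs)"
proof -
  have "bdd_below {sum_list (map w hs) | hs. dpath H u v hs}"
    by (rule bdd_belowI[of _ 0]) (auto simp: dpath_def path_cost_nonneg)
  then show ?thesis
    using assms unfolding hdist_def by (auto intro: cInf_lower)
qed

lemma hdist_greatest:
  assumes "u \<in> V" "v \<in> V" "u \<noteq> v" "\<And>hs. dpath H u v hs \<Longrightarrow> r \<le> sum_list (map w hs)"
  shows "r \<le> d u v"
proof -
  have "{sum_list (map w hs) | hs. dpath H u v hs} \<noteq> {}"
    using dpath_exists[OF assms(1-3)] by blast
  then have "r \<le> Inf {sum_list (map w hs) | hs. dpath H u v hs}"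
    by (rule cInf_greatest) (use assms(4) in blast)
  then show ?thesis
    using assms(3) by (simp add: hdist_def)
qed

lemma hdist_self [simp]: "d u u = 0"
  by (simp add: hdist_def)

lemma hdist_nonneg:
  assumes "u \<in> V" "v \<in> V"
  shows "0 \<le> d u v"
proof (cases "u = v")
  case False
  show ?thesis
    by (rule hdist_greatest[OF assms False]) (simp add: dpath_def path_cost_nonneg)
qed simp

lemma hdist_pos:
  assumes "u \<in> V" "v \<in> V" "u \<noteq> v"
  shows "0 < d u v"
proof -
  obtain hs0 where "dpath H u v hs0"
    using dpath_exists[OF assms] by blast
  then have "H \<noteq> {}" by (auto simp: dpath_def)
  then have pos: "0 < Min (w ` H)"
    using finite_H hedge_wf(7) by (simp add: Min_gr_iff)
  have "Min (w ` H) \<le> sum_list (map w hs)" if p: "dpath H u v hs" for hs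
  proof -
    obtain h hs' where hs: "hs = h # hs'"
      using p by (cases hs) (simp_all add: dpath_def)
    then have "h \<in> H" "set hs' \<subseteq> H"
      using p by (auto simp: dpath_def)
    then have "Min (w ` H) \<le> w h" "0 \<le> sum_list (map w hs')"
      using finite_H path_cost_nonneg by auto
    then show ?thesis
      using hs by simp
  qed
  then have "Min (w ` H) \<le> d u v"
    by (rule hdist_greatest[OF assms])
  with pos show ?thesis by simp
qed

lemma hdist_triangle:
  assumes "a \<in> V" "b \<in> V" "c \<in> V"
  shows "d a c \<le> d a b + d b c"
proof (cases "a = b \<or> b = c \<or> a = c")
  case True
  then show ?thesis using hdist_nonneg assms by (auto intro: add_nonneg_nonneg)
next
  case False
  have key: "d a c - sum_list (map w q) \<le> d a b" if q: "dpath H b c q" for q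
  proof (rule hdist_greatest[OF assms(1,2)])
    show "a \<noteq> b" using False by blast
    fix p assume "dpath H a b p"
    then have "d a c \<le> sum_list (map w (p @ q))"
      using hdist_le_path_cost[OF dpath_append[OF _ q]] False by blast
    then show "d a c - sum_list (map w q) \<le> sum_list (map w p)" by simp
  qed
  have "d a c - d a b \<le> d b c"
  proof (rule hdist_greatest[OF assms(2,3)])
    show "b \<noteq> c" using False by blast
    fix q assume "dpath H b c q"
    then show "d a c - d a b \<le> sum_list (map w q)" using key by force
  qed
  then show ?thesis by simp
qed

lemma hdist_le_weight:
  assumes "h \<in> H" "a \<in> fst h" "b \<in> snd h"
  shows "d a b \<le> w h" "d b a \<le> w h"
proof -
  have "a \<noteq> b" using hedge_wf(5)[OF assms(1)] assms by auto
  have "dpath H a b [h]" "dpath H b a [(snd h, fst h)]"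
    using assms hedge_wf(6) by (auto simp: dpath_def)
  from hdist_le_path_cost[OF this(1) \<open>a \<noteq> b\<close>] hdist_le_path_cost[OF this(2) \<open>a \<noteq> b\<close>[symmetric]]
  show "d a b \<le> w h" "d b a \<le> w h"
    using hedge_wf(8)[OF assms(1)] by simp_all
qed

lemma weight_le_wmax: "h \<in> H \<Longrightarrow> w h \<le> wmax H w"
  unfolding wmax_def using finite_H by auto

lemma ex_other_vertex: "\<exists>v\<in>V. v \<noteq> u"
proof (rule ccontr)
  assume "\<not> (\<exists>v\<in>V. v \<noteq> u)"
  then have "card V \<le> card {u}"
    by (intro card_mono) auto
  then show False
    using two_le_card by simp
qed

lemma ex_hedge_into: "u \<in> V \<Longrightarrow> \<exists>h\<in>H. u \<in> snd h"
proof -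
  assume "u \<in> V"
  moreover obtain v where "v \<in> V" "v \<noteq> u"
    using ex_other_vertex by blast
  ultimately obtain hs where "dpath H u v hs"
    using dpath_exists by blast
  then have "hd hs \<in> H" "u \<in> fst (hd hs)" by (auto simp: dpath_def)
  then show ?thesis
    by (intro bexI[of _ "(snd (hd hs), fst (hd hs))"]) (auto intro: hedge_wf(6))
qed

lemma wmax_pos: "0 < wmax H w"
proof -
  have "V \<noteq> {}" using two_le_card by auto
  then obtain u where "u \<in> V" by blast
  then obtain h where "h \<in> H" using ex_hedge_into by blast
  then show ?thesis using hedge_wf(7) weight_le_wmax less_le_trans by blast
qed

lemma one_lipschitz_hdist_to: "y \<in> V \<Longrightarrow> one_lipschitz V d (\<lambda>z. d z y)"
  unfolding one_lipschitz_def diff_le_eq using hdist_triangle by blast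

lemma one_lipschitz_hdist_to_set:
  assumes "B \<subseteq> V" "B \<noteq> {}"
  shows "one_lipschitz V d (\<lambda>z. Min ((\<lambda>y. d z y) ` B))"
  unfolding one_lipschitz_def
proof (intro ballI)
  fix a b assume ab: "a \<in> V" "b \<in> V"
  have fin: "finite B" using assms finite_V finite_subset by blast
  have "Min ((\<lambda>y. d b y) ` B) \<in> (\<lambda>y. d b y) ` B"
    using fin assms by (intro Min_in) auto
  then obtain y where y: "y \<in> B" "Min ((\<lambda>y. d b y) ` B) = d b y"
    by auto
  have "Min ((\<lambda>y. d a y) ` B) \<le> d a y" using fin y by auto
  also have "\<dots> \<le> d a b + d b y" by (rule hdist_triangle[OF ab subsetD[OF assms(1) y(1)]])
  finally show "Min ((\<lambda>y. d a y) ` B) - Min ((\<lambda>y. d b y) ` B) \<le> d a b" using y(2) by linarith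
qed

text \<open>Reversal of hyperedges is a weight-preserving involution of \<open>H\<close>.\<close>

lemma mu_out_eq_mu_in: "mu_out H w \<alpha> u = mu_in H w \<alpha> u"
proof
  fix z
  define r where "r h = (snd h, fst h)" for h :: "'v hedge"
  have r: "r (r h) = h" "h \<in> H \<Longrightarrow> r h \<in> H" "h \<in> H \<Longrightarrow> w (r h) = w h" for h
    using hedge_wf(6,8) by (auto simp: r_def)
  have "(\<Sum>h\<in>{h\<in>H. u \<in> fst h}. w h) = (\<Sum>h\<in>{h\<in>H. u \<in> snd h}. w h)"
    by (rule sum.reindex_bij_witness[of _ r r]) (auto simp: r, auto simp: r_def)
  moreover have "(\<Sum>h\<in>{h\<in>H. u \<in> fst h \<and> z \<in> snd h}. 1 / real (card (snd h)) * (w h / S))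
      = (\<Sum>h\<in>{h\<in>H. u \<in> snd h \<and> z \<in> fst h}. 1 / real (card (fst h)) * (w h / S))" for S
    by (rule sum.reindex_bij_witness[of _ r r]) (auto simp: r, auto simp: r_def)
  ultimately show "mu_out H w \<alpha> u z = mu_in H w \<alpha> u z"
    unfolding mu_in_def mu_out_def by simp
qed

lemma mu_in_self: "mu_in H w \<alpha> u u = \<alpha>"
proof -
  have "{h\<in>H. u \<in> snd h \<and> u \<in> fst h} = {}"
    using hedge_wf(5) by blast
  then show ?thesis
    unfolding mu_in_def by (simp only: sum.empty) simp
qed

lemma mu_in_support:
  assumes "z \<noteq> u" "mu_in H w \<alpha> u z \<noteq> 0"
  obtains h where "h \<in> H" "u \<in> snd h" "z \<in> fst h"
proof -
  have "{h\<in>H. u \<in> snd h \<and> z \<in> fst h} \<noteq> {}"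
  proof
    assume "{h\<in>H. u \<in> snd h \<and> z \<in> fst h} = {}"
    then have "mu_in H w \<alpha> u z = 0"
      using assms(1) unfolding mu_in_def by (simp only: sum.empty) simp
    with assms(2) show False ..
  qed
  then show thesis using that by blast
qed

lemma mu_in_nonneg: "0 \<le> \<alpha> \<Longrightarrow> \<alpha> \<le> 1 \<Longrightarrow> 0 \<le> mu_in H w \<alpha> u z"
  unfolding mu_in_def using hedge_wf(7)
  by (intro add_nonneg_nonneg mult_nonneg_nonneg sum_nonneg divide_nonneg_nonneg) (auto intro: less_imp_le)

lemma mu_in_mass:
  assumes "u \<in> V"
  shows "(\<Sum>z\<in>V. mu_in H w \<alpha> u z) = 1"
proof -
  define E where "E = {h\<in>H. u \<in> snd h}"
  define S where "S = (\<Sum>h\<in>E. w h)"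
  define c where "c h = 1 / real (card (fst h)) * (w h / S)" for h
  have finE: "finite E" using finite_H by (simp add: E_def)
  have "E \<noteq> {}"
    using ex_hedge_into[OF assms] unfolding E_def by blast
  then have "0 < S"
    unfolding S_def using finE hedge_wf(7) by (intro sum_pos) (auto simp: E_def)
  have "(\<Sum>z\<in>V. \<Sum>h\<in>{h. h \<in> E \<and> z \<in> fst h}. c h) = (\<Sum>h\<in>E. \<Sum>z\<in>{z. z \<in> V \<and> z \<in> fst h}. c h)"
    by (rule sum.swap_restrict[OF finite_V finE])
  also have "\<dots> = (\<Sum>h\<in>E. w h / S)"
  proof (rule sum.cong[OF refl])
    fix h assume h: "h \<in> E"
    then have "h \<in> H" by (simp add: E_def)
    then have "{z. z \<in> V \<and> z \<in> fst h} = fst h" "card (fst h) \<noteq> 0"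
      using hedge_wf(1,3)[of h] finite_fst[of h] by auto
    then show "(\<Sum>z\<in>{z. z \<in> V \<and> z \<in> fst h}. c h) = w h / S"
      by (simp add: c_def)
  qed
  also have "\<dots> = 1"
    using \<open>0 < S\<close> by (simp add: S_def flip: sum_divide_distrib)
  finally have P: "(\<Sum>z\<in>V. \<Sum>h\<in>{h\<in>H. u \<in> snd h \<and> z \<in> fst h}. c h) = 1"
    by (simp add: E_def conj_assoc)
  have "mu_in H w \<alpha> u z = (if z = u then \<alpha> else 0) + (1 - \<alpha>) * (\<Sum>h\<in>{h\<in>H. u \<in> snd h \<and> z \<in> fst h}. c h)"
    for z unfolding mu_in_def c_def S_def E_def ..
  then have "(\<Sum>z\<in>V. mu_in H w \<alpha> u z)
      = (\<Sum>z\<in>V. if z = u then \<alpha> else 0) + (1 - \<alpha>) * (\<Sum>z\<in>V. \<Sum>h\<in>{h\<in>H. u \<in> snd h \<and> z \<in> fst h}. c h)"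
    by (simp only: sum.distrib sum_distrib_left)
  then show ?thesis
    using assms finite_V P by simp
qed

lemma prob_vector_mu_in: "u \<in> V \<Longrightarrow> 0 \<le> \<alpha> \<Longrightarrow> \<alpha> \<le> 1 \<Longrightarrow> prob_vector V (mu_in H w \<alpha> u)"
  by (simp add: prob_vector_def mu_in_nonneg mu_in_mass)

text \<open>The random walk moves mass \<open>1 - \<alpha>\<close> only along hyperedges, i.e. by at most \<open>wmax\<close>.\<close>

lemma mean_mu_in_close:
  assumes u: "u \<in> V" and \<alpha>: "0 \<le> \<alpha>" "\<alpha> \<le> 1" and \<phi>: "one_lipschitz V d \<phi>"
  shows "\<bar>(\<Sum>z\<in>V. mu_in H w \<alpha> u z * \<phi> z) - \<phi> u\<bar> \<le> (1 - \<alpha>) * wmax H w"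
proof -
  have near: "\<bar>\<phi> z - \<phi> u\<bar> \<le> wmax H w" if z: "z \<in> V" "z \<noteq> u" "mu_in H w \<alpha> u z \<noteq> 0" for z
  proof -
    obtain h where h: "h \<in> H" "u \<in> snd h" "z \<in> fst h"
      using mu_in_support[OF z(2,3)] .
    have "\<phi> z - \<phi> u \<le> d z u" "\<phi> u - \<phi> z \<le> d u z"
      using \<phi> z u by (auto simp: one_lipschitz_def)
    moreover have "d z u \<le> w h" "d u z \<le> w h"
      using hdist_le_weight[OF h(1,3,2)] .
    ultimately show ?thesis
      using weight_le_wmax[OF h(1)] by linarith
  qed
  have "\<bar>(\<Sum>z\<in>V. mu_in H w \<alpha> u z * \<phi> z) - \<phi> u\<bar> \<le> (1 - mu_in H w \<alpha> u u) * wmax H w"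
    by (rule abs_mean_minus_le[OF prob_vector_mu_in[OF u \<alpha>] u]) (rule near)
  then show ?thesis by (simp only: mu_in_self)
qed

subsection \<open>Hyperedge curvature\<close>

lemma mu_B_eq: "mu_B H w \<alpha> h = (\<lambda>z. (\<Sum>y\<in>snd h. mu_in H w \<alpha> y z) / card (snd h))"
  by (simp add: fun_eq_iff mu_B_def mu_head_vertex_eq mu_out_eq_mu_in sum_divide_distrib)

lemma hedge_len_eq_Min_image:
  "hedge_len H w h = Min ((\<lambda>(x, y). d x y) ` (fst h \<times> snd h))"
  unfolding hedge_len_def by (rule arg_cong[where f = Min]) auto

lemma hedge_len_le:
  assumes "h \<in> H" "x \<in> fst h" "y \<in> snd h"
  shows "hedge_len H w h \<le> d x y"
  unfolding hedge_len_eq_Min_image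
  using assms finite_fst[OF assms(1)] finite_snd[OF assms(1)] by (auto intro!: Min_le)

lemma hedge_len_pos:
  assumes "h \<in> H"
  shows "0 < hedge_len H w h"
proof -
  have "0 < d x y" if "x \<in> fst h" "y \<in> snd h" for x y
    using hdist_pos hedge_wf[OF assms] that by blast
  then show ?thesis
    unfolding hedge_len_eq_Min_image
    using finite_fst[OF assms] finite_snd[OF assms] hedge_wf(1,2)[OF assms] by (auto simp: Min_gr_iff)
qed

text \<open>The test function is the distance to the head \<open>B\<^sub>h\<close>: it is at least \<open>L(h)\<close> on the tail and
  vanishes on the head.\<close>

lemma hedge_len_le_wasserstein:
  assumes h: "h \<in> H" and \<alpha>: "0 \<le> \<alpha>" "\<alpha> \<le> 1"
  shows "hedge_len H w h - 2 * (1 - \<alpha>) * wmax H w \<le> wasserstein V d (mu_A H w \<alpha> h) (mu_B H w \<alpha> h)"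
proof -
  let ?M = "(1 - \<alpha>) * wmax H w"
  define \<phi> where "\<phi> z = Min ((\<lambda>y. d z y) ` snd h)" for z
  have \<phi>: "one_lipschitz V d \<phi>"
    unfolding \<phi>_def using hedge_wf[OF h] by (intro one_lipschitz_hdist_to_set)
  have mean: "\<bar>(\<Sum>z\<in>V. mu_in H w \<alpha> x z * \<phi> z) - \<phi> x\<bar> \<le> ?M" if "x \<in> V" for x
    using mean_mu_in_close[OF that \<alpha> \<phi>] .
  have tail: "hedge_len H w h - ?M \<le> (\<Sum>z\<in>V. mu_in H w \<alpha> x z * \<phi> z)" if x: "x \<in> fst h" for x
  proof -
    have "hedge_len H w h \<le> \<phi> x"
      unfolding \<phi>_def using hedge_wf[OF h] finite_snd[OF h] x hedge_len_le[OF h x] by (auto intro: Min.boundedI)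
    then show ?thesis using mean[of x] x hedge_wf(3)[OF h] by auto
  qed
  have head: "(\<Sum>z\<in>V. mu_in H w \<alpha> y z * \<phi> z) \<le> ?M" if y: "y \<in> snd h" for y
  proof -
    have "\<phi> y \<le> d y y"
      unfolding \<phi>_def by (rule Min_le[OF finite_imageI[OF finite_snd[OF h]] imageI[OF y]])
    then have "\<phi> y \<le> 0" by simp
    then show ?thesis using mean[of y] y hedge_wf(4)[OF h] by auto
  qed
  have prob: "prob_vector V (mu_in H w \<alpha> x)" if "x \<in> V" for x
    using prob_vector_mu_in[OF that \<alpha>] .
  have card: "0 < real (card (fst h))" "0 < real (card (snd h))"
    using hedge_wf(1,2)[OF h] finite_fst[OF h] finite_snd[OF h] by auto
  have "real (card (fst h)) * (hedge_len H w h - ?M) \<le> (\<Sum>x\<in>fst h. \<Sum>z\<in>V. mu_in H w \<alpha> x z * \<phi> z)"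
    by (rule sum_bounded_below) (rule tail)
  also have "\<dots> = real (card (fst h)) * (\<Sum>z\<in>V. mu_A H w \<alpha> h z * \<phi> z)"
    unfolding mu_A_eq using card(1) hedge_wf(1,3)[OF h] finite_fst[OF h]
    by (subst mean_average) (auto intro: prob)
  finally have mean_A: "hedge_len H w h - ?M \<le> (\<Sum>z\<in>V. mu_A H w \<alpha> h z * \<phi> z)"
    using card(1) by simp
  have "real (card (snd h)) * (\<Sum>z\<in>V. mu_B H w \<alpha> h z * \<phi> z)
      = (\<Sum>y\<in>snd h. \<Sum>z\<in>V. mu_in H w \<alpha> y z * \<phi> z)"
    unfolding mu_B_eq using card(2) hedge_wf(2,4)[OF h] finite_snd[OF h]
    by (subst mean_average) (auto intro: prob)
  also have "\<dots> \<le> real (card (snd h)) * ?M"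
    by (rule sum_bounded_above) (rule head)
  finally have mean_B: "(\<Sum>z\<in>V. mu_B H w \<alpha> h z * \<phi> z) \<le> ?M"
    using card(2) by simp
  have "(\<Sum>z\<in>V. mu_A H w \<alpha> h z * \<phi> z) - (\<Sum>z\<in>V. mu_B H w \<alpha> h z * \<phi> z)
      \<le> wasserstein V d (mu_A H w \<alpha> h) (mu_B H w \<alpha> h)"
    using hedge_wf[OF h] finite_fst[OF h] finite_snd[OF h]
    by (intro lipschitz_mean_diff_le_wasserstein \<phi>)
      (auto simp: mu_A_eq mu_B_eq hdist_nonneg prob subsetD intro!: prob_vector_average)
  with mean_A mean_B show ?thesis by linarith
qed

lemma edge_curvature_bound:
  assumes h: "h \<in> H" and lim: "((\<lambda>\<alpha>. kappa_alpha_edge V H w \<alpha> h / (1 - \<alpha>)) \<longlongrightarrow> k) (at_left 1)"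
    and k: "0 < k"
  shows "hedge_len H w h \<le> 2 * wmax H w / k"
proof -
  let ?L = "hedge_len H w h"
  have "\<forall>\<^sub>F \<alpha> in at_left 1. kappa_alpha_edge V H w \<alpha> h / (1 - \<alpha>) \<le> 2 * wmax H w / ?L"
  proof (rule eventually_mono[OF eventually_at_left_real[OF zero_less_one]])
    fix \<alpha> :: real assume \<alpha>: "\<alpha> \<in> {0<..<1}"
    then have "?L - wasserstein V d (mu_A H w \<alpha> h) (mu_B H w \<alpha> h) \<le> 2 * (1 - \<alpha>) * wmax H w"
      using hedge_len_le_wasserstein[OF h, of \<alpha>] by simp
    then show "kappa_alpha_edge V H w \<alpha> h / (1 - \<alpha>) \<le> 2 * wmax H w / ?L"
      unfolding kappa_alpha_edge_def using hedge_len_pos[OF h] \<alpha> by (intro curvature_ratio_le) auto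
  qed
  then have "k \<le> 2 * wmax H w / ?L"
    using tendsto_upperbound[OF lim _ trivial_limit_at_left_real] by blast
  then show ?thesis
    using k hedge_len_pos[OF h] by (simp add: field_simps)
qed

subsection \<open>Vertex curvature and the diameter\<close>

lemma mean_diff_le_wasserstein_vertex:
  assumes "a \<in> V" "b \<in> V" "0 \<le> \<alpha>" "\<alpha> \<le> 1" "one_lipschitz V d \<phi>"
  shows "(\<Sum>z\<in>V. mu_in H w \<alpha> a z * \<phi> z) - (\<Sum>z\<in>V. mu_in H w \<alpha> b z * \<phi> z)
    \<le> wasserstein V d (mu_in H w \<alpha> a) (mu_out H w \<alpha> b)"
  unfolding mu_out_eq_mu_in
  using assms by (intro lipschitz_mean_diff_le_wasserstein prob_vector_mu_in) (auto simp: hdist_nonneg)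

lemma hdist_le_wasserstein_vertex:
  assumes a: "a \<in> V" and b: "b \<in> V" and \<alpha>: "0 \<le> \<alpha>" "\<alpha> \<le> 1"
  shows "d a b - 2 * (1 - \<alpha>) * wmax H w \<le> wasserstein V d (mu_in H w \<alpha> a) (mu_out H w \<alpha> b)"
proof -
  have \<phi>: "one_lipschitz V d (\<lambda>z. d z b)"
    by (rule one_lipschitz_hdist_to[OF b])
  have "2 * (1 - \<alpha>) * wmax H w = 2 * ((1 - \<alpha>) * wmax H w)" by simp
  then show ?thesis
    using abs_le_D2[OF mean_mu_in_close[OF a \<alpha> \<phi>]] abs_le_D1[OF mean_mu_in_close[OF b \<alpha> \<phi>]]
      mean_diff_le_wasserstein_vertex[OF a b \<alpha> \<phi>] hdist_self[of b] by linarith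
qed

lemma kappa_alpha_vertex_ratio_le:
  assumes "a \<in> V" "b \<in> V" "a \<noteq> b" "0 \<le> \<alpha>" "\<alpha> < 1"
  shows "kappa_alpha_vertex V H w \<alpha> a b / (1 - \<alpha>) \<le> 2 * wmax H w / d a b"
  unfolding kappa_alpha_vertex_def
  using assms hdist_pos hdist_le_wasserstein_vertex[of a b \<alpha>] by (intro curvature_ratio_le) auto

text \<open>The measures at laziness \<open>\<beta>\<close> mix those at laziness \<open>\<alpha>\<close> with the point masses at \<open>a\<close> and
  \<open>b\<close>, which can be transported directly at cost \<open>d(a, b)\<close>.\<close>

lemma kappa_alpha_vertex_ratio_mono:
  assumes ab: "a \<in> V" "b \<in> V" "a \<noteq> b" and \<alpha>\<beta>: "0 \<le> \<alpha>" "\<alpha> \<le> \<beta>" "\<beta> < 1"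
  shows "kappa_alpha_vertex V H w \<alpha> a b / (1 - \<alpha>) \<le> kappa_alpha_vertex V H w \<beta> a b / (1 - \<beta>)"
proof -
  define t where "t = (1 - \<beta>) / (1 - \<alpha>)"
  have t: "0 < t" "t \<le> 1" "(1 - \<alpha>) * t = 1 - \<beta>"
    using \<alpha>\<beta> by (auto simp: t_def)
  define D where "D = d a b"
  have "0 < D" using hdist_pos[OF ab] by (simp add: D_def)
  define W where "W \<gamma> = wasserstein V d (mu_in H w \<gamma> a) (mu_out H w \<gamma> b)" for \<gamma>
  have "W \<beta> \<le> t * W \<alpha> + (1 - t) * D"
    unfolding W_def D_def mu_out_eq_mu_in mu_in_mix[OF order.strict_trans1[OF \<alpha>\<beta>(2,3)], where \<beta> = \<beta>]
    unfolding t_def[symmetric]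
    using ab \<alpha>\<beta> t by (intro wasserstein_mix_point_mass_le prob_vector_mu_in) (auto simp: hdist_nonneg)
  then have "W \<beta> / D \<le> (t * W \<alpha> + (1 - t) * D) / D"
    using \<open>0 < D\<close> by (intro divide_right_mono) auto
  also have "\<dots> = 1 - t * (1 - W \<alpha> / D)"
    using \<open>0 < D\<close> by (simp add: field_simps)
  finally have "t * (1 - W \<alpha> / D) \<le> 1 - W \<beta> / D"
    by simp
  then have "t * (1 - W \<alpha> / D) / (1 - \<beta>) \<le> (1 - W \<beta> / D) / (1 - \<beta>)"
    using \<alpha>\<beta> by (intro divide_right_mono) auto
  moreover have "t * (1 - W \<alpha> / D) / (1 - \<beta>) = (1 - W \<alpha> / D) / (1 - \<alpha>)"
    unfolding t(3)[symmetric] using t(1) by simp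
  ultimately have "(1 - W \<alpha> / D) / (1 - \<alpha>) \<le> (1 - W \<beta> / D) / (1 - \<beta>)"
    by simp
  then show ?thesis
    by (simp add: kappa_alpha_vertex_def W_def D_def)
qed

text \<open>Monotonicity and boundedness make the limit exist, so \<open>Lim\<close> in \<open>kappa_vertex\<close> is not a junk value.\<close>

lemma kappa_vertex_tendsto:
  assumes ab: "a \<in> V" "b \<in> V" "a \<noteq> b"
  shows "((\<lambda>\<alpha>. kappa_alpha_vertex V H w \<alpha> a b / (1 - \<alpha>)) \<longlongrightarrow> kappa_vertex V H w a b) (at_left 1)"
proof -
  let ?f = "\<lambda>\<alpha>. kappa_alpha_vertex V H w \<alpha> a b / (1 - \<alpha>)"
  have "(?f \<longlongrightarrow> Sup (?f ` ({..<1} \<inter> {0<..}))) (at 1 within ({..<1} \<inter> {0<..}))"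
    using kappa_alpha_vertex_ratio_mono[OF ab] kappa_alpha_vertex_ratio_le[OF ab]
    by (intro Lim_left_bound[where K = "2 * wmax H w / d a b"]) auto
  moreover have "\<forall>\<^sub>F \<alpha> in at (1 :: real). \<alpha> \<in> {..<1} \<inter> {0<..} \<longleftrightarrow> \<alpha> \<in> {..<1}"
    using order_tendstoD(1)[OF tendsto_ident_at[of "1 :: real" UNIV] zero_less_one]
    by (rule eventually_mono) auto
  ultimately have "(?f \<longlongrightarrow> Sup (?f ` ({..<1} \<inter> {0<..}))) (at_left 1)"
    by (rule Lim_transform_within_set)
  then show ?thesis
    unfolding kappa_vertex_def using tendsto_Lim[OF trivial_limit_at_left_real] by metis
qed

text \<open>The mean of the distance to \<open>y\<close> drops by at most \<open>c\<close> per unit of cost along every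
  hyperedge, hence by at most \<open>c d(x, y)\<close> from \<open>x\<close> to \<open>y\<close>; but the two means are within
  \<open>(1 - \<alpha>) wmax\<close> of \<open>d(x, y)\<close> and \<open>0\<close>.\<close>

lemma hdist_contraction:
  assumes \<alpha>: "0 \<le> \<alpha>" "\<alpha> \<le> 1" and c: "0 \<le> c"
    and edges: "\<And>h a b. h \<in> H \<Longrightarrow> a \<in> fst h \<Longrightarrow> b \<in> snd h \<Longrightarrow>
      wasserstein V d (mu_in H w \<alpha> a) (mu_out H w \<alpha> b) \<le> c * d a b"
    and xy: "x \<in> V" "y \<in> V"
  shows "d x y - 2 * (1 - \<alpha>) * wmax H w \<le> c * d x y"
proof (cases "x = y")
  case True
  then show ?thesis using \<alpha> wmax_pos by simp
next
  case False
  define \<phi> where "\<phi> z = d z y" for z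
  define F where "F u = (\<Sum>z\<in>V. mu_in H w \<alpha> u z * \<phi> z)" for u
  have \<phi>: "one_lipschitz V d \<phi>"
    unfolding \<phi>_def by (rule one_lipschitz_hdist_to[OF xy(2)])
  have step: "F a - F b \<le> c * w h" if h: "h \<in> H" "a \<in> fst h" "b \<in> snd h" for h a b
  proof -
    have "a \<in> V" "b \<in> V" using hedge_wf(3,4)[OF h(1)] h by auto
    then have "F a - F b \<le> c * d a b"
      unfolding F_def using mean_diff_le_wasserstein_vertex[OF _ _ \<alpha> \<phi>] edges[OF h] by fastforce
    also have "\<dots> \<le> c * w h"
      using hdist_le_weight(1)[OF h] c by (rule mult_left_mono)
    finally show ?thesis .
  qed
  have "F x - F y \<le> c * d x y"
  proof (cases "c = 0")
    case True
    obtain hs where "dpath H x y hs" using dpath_exists[OF xy False] by blast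
    then show ?thesis using dpath_telescope[OF step] True by fastforce
  next
    case False
    then have "(F x - F y) / c \<le> d x y"
      using c dpath_telescope[OF step]
      by (intro hdist_greatest[OF xy \<open>x \<noteq> y\<close>]) (simp add: pos_divide_le_eq mult.commute)
    then show ?thesis
      using c False by (simp add: pos_divide_le_eq mult.commute)
  qed
  moreover have "d x y - F x \<le> (1 - \<alpha>) * wmax H w" "F y \<le> (1 - \<alpha>) * wmax H w"
    using abs_le_D2[OF mean_mu_in_close[OF xy(1) \<alpha> \<phi>]] abs_le_D1[OF mean_mu_in_close[OF xy(2) \<alpha> \<phi>]]
    by (simp_all add: F_def \<phi>_def)
  moreover have "2 * (1 - \<alpha>) * wmax H w = 2 * ((1 - \<alpha>) * wmax H w)" by simp
  ultimately show ?thesis by linarith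
qed

lemma hdist_bound_of_edge_ratios:
  assumes \<alpha>: "0 < \<alpha>" "\<alpha> < 1" and \<kappa>: "0 \<le> \<kappa>" "(1 - \<alpha>) * \<kappa> \<le> 1"
    and ratios: "\<And>h a b. h \<in> H \<Longrightarrow> a \<in> fst h \<Longrightarrow> b \<in> snd h \<Longrightarrow>
      \<kappa> \<le> kappa_alpha_vertex V H w \<alpha> a b / (1 - \<alpha>)"
    and xy: "x \<in> V" "y \<in> V"
  shows "\<kappa> * d x y \<le> 2 * wmax H w"
proof -
  define c where "c = 1 - (1 - \<alpha>) * \<kappa>"
  have edges: "wasserstein V d (mu_in H w \<alpha> a) (mu_out H w \<alpha> b) \<le> c * d a b"
    if h: "h \<in> H" "a \<in> fst h" "b \<in> snd h" for h a b
  proof -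
    have "(1 - \<alpha>) * \<kappa> \<le> kappa_alpha_vertex V H w \<alpha> a b"
      using ratios[OF h] \<alpha> by (simp add: pos_le_divide_eq mult.commute)
    then have "wasserstein V d (mu_in H w \<alpha> a) (mu_out H w \<alpha> b) / d a b \<le> c"
      unfolding kappa_alpha_vertex_def c_def by linarith
    moreover have "0 < d a b" using hdist_pos hedge_wf[OF h(1)] h by blast
    ultimately show ?thesis
      by (simp add: pos_divide_le_eq)
  qed
  have "d x y - 2 * (1 - \<alpha>) * wmax H w \<le> c * d x y"
    using \<alpha> \<kappa> edges xy by (intro hdist_contraction) (auto simp: c_def)
  then have "(1 - \<alpha>) * (\<kappa> * d x y) \<le> (1 - \<alpha>) * (2 * wmax H w)"
    by (simp add: c_def algebra_simps)
  then show ?thesis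
    using \<alpha> by simp
qed

lemma eventually_edge_ratios_gt:
  assumes curv: "\<forall>h\<in>H. \<forall>u\<in>fst h. \<forall>v\<in>snd h. \<kappa> \<le> kappa_vertex V H w u v" and "\<kappa>' < \<kappa>"
  shows "\<forall>\<^sub>F \<alpha> in at_left 1. \<forall>h\<in>H. \<forall>a\<in>fst h. \<forall>b\<in>snd h.
    \<kappa>' < kappa_alpha_vertex V H w \<alpha> a b / (1 - \<alpha>)"
proof (intro eventually_ball_finite finite_H finite_fst finite_snd ballI)
  fix h a b assume h: "h \<in> H" "a \<in> fst h" "b \<in> snd h"
  then have "a \<in> V" "b \<in> V" "a \<noteq> b" using hedge_wf[OF h(1)] by auto
  moreover have "\<kappa>' < kappa_vertex V H w a b" using curv h \<open>\<kappa>' < \<kappa>\<close> by fastforce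
  ultimately show "\<forall>\<^sub>F \<alpha> in at_left 1. \<kappa>' < kappa_alpha_vertex V H w \<alpha> a b / (1 - \<alpha>)"
    using kappa_vertex_tendsto order_tendstoD(1) by blast
qed

lemma diam_le_of_vertex_curvature:
  assumes "0 < \<kappa>" and curv: "\<forall>h\<in>H. \<forall>u\<in>fst h. \<forall>v\<in>snd h. \<kappa> \<le> kappa_vertex V H w u v"
  shows "diam V H w \<le> 2 * wmax H w / \<kappa>"
proof -
  have "\<kappa> * d x y \<le> 2 * wmax H w" if xy: "x \<in> V" "y \<in> V" for x y
  proof (cases "x = y")
    case True
    then show ?thesis using wmax_pos by simp
  next
    case False
    then have D: "0 < d x y" using hdist_pos xy by blast
    have "\<kappa> \<le> 2 * wmax H w / d x y"
    proof (rule dense_le_bounded[OF \<open>0 < \<kappa>\<close>])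
      fix \<kappa>' assume \<kappa>': "0 < \<kappa>'" "\<kappa>' < \<kappa>"
      have "((\<lambda>\<alpha>. (1 - \<alpha>) * \<kappa>') \<longlongrightarrow> (1 - 1) * \<kappa>') (at_left (1 :: real))"
        by (intro tendsto_intros)
      then have "\<forall>\<^sub>F \<alpha> in at_left 1. (1 - \<alpha>) * \<kappa>' < 1"
        by (rule order_tendstoD(2)) simp
      moreover note eventually_edge_ratios_gt[OF curv \<kappa>'(2)] eventually_at_left_real[OF zero_less_one]
      ultimately obtain \<alpha> where "(1 - \<alpha>) * \<kappa>' < 1" "\<alpha> \<in> {0<..<1}"
        and "\<forall>h\<in>H. \<forall>a\<in>fst h. \<forall>b\<in>snd h. \<kappa>' < kappa_alpha_vertex V H w \<alpha> a b / (1 - \<alpha>)"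
        using eventually_happens'[OF trivial_limit_at_left_real eventually_conj[OF _ eventually_conj]]
        by blast
      then have "\<kappa>' * d x y \<le> 2 * wmax H w"
        using \<kappa>'(1) xy by (intro hdist_bound_of_edge_ratios[of \<alpha>]) (auto intro: less_imp_le)
      then show "\<kappa>' \<le> 2 * wmax H w / d x y"
        using D by (simp add: pos_le_divide_eq)
    qed
    then show ?thesis
      using D by (simp add: pos_le_divide_eq mult.commute)
  qed
  then have "d x y \<le> 2 * wmax H w / \<kappa>" if "x \<in> V" "y \<in> V" for x y
    using that \<open>0 < \<kappa>\<close> by (simp add: pos_le_divide_eq mult.commute)
  moreover have "{hdist H w u v | u v. u \<in> V \<and> v \<in> V} = (\<lambda>(u, v). d u v) ` (V \<times> V)"
    by auto
  moreover have "V \<noteq> {}" using two_le_card by auto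
  ultimately show ?thesis
    unfolding diam_def using finite_V by (auto intro!: Max.boundedI)
qed

end

theorem mainTheorem8:
  fixes V :: "'v set" and H :: "'v hedge set" and w :: "'v hedge \<Rightarrow> real"
  assumes "oriented_hypergraph V H w"
    and "strongly_connected V H"
    and "card V \<ge> 2"
  shows "(\<forall>h\<in>H. \<forall>k::real.
            ((\<lambda>\<alpha>. kappa_alpha_edge V H w \<alpha> h / (1 - \<alpha>)) \<longlongrightarrow> k) (at_left 1) \<and> k > 0
            \<longrightarrow> hedge_len H w h \<le> 2 * wmax H w / k)
       \<and> (\<forall>\<kappa>::real. \<kappa> > 0 \<and>
            (\<forall>h\<in>H. \<forall>u\<in>fst h. \<forall>v\<in>snd h. kappa_vertex V H w u v \<ge> \<kappa>)
            \<longrightarrow> diam V H w \<le> 2 * wmax H w / \<kappa>)"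
proof -
  interpret strongly_connected_hypergraph V H w
    using assms by unfold_locales
  show ?thesis
    using edge_curvature_bound diam_le_of_vertex_curvature by blast
qed

end
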